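(* Let $g_1,g_2$ be monic divisors of $x^m-1$ over $\mathbb{F}_q$ and $v\in\mathcal{R}$ with $\gcd(v^2-1,x^m-1)=1$, and let $\mathcal{D}_3$ be the QC code of length $2m$ generated by $(g_1,vg_1)$ and $(vg_2,g_2)$. Then $\mathcal{D}_3$ is symplectic dual-containing iff $g_1\mid g_1^{\perp}(v-\overline{v})$, $g_2\mid g_1^{\perp}(1-\overline{v}v)$ and $g_2\mid g_2^{\perp}(\overline{v}-v)$.
   Context: $\mathcal{R}=\mathbb{F}_q[x]/(x^m-1)$, elements identified with representatives of degree $<m$; $[k]=(k_0,\dots,k_{m-1})$; $\overline{k}(x)=k(x^{-1})\bmod(x^m-1)$; $f^*(x)=x^{\deg f}f(1/x)$; for $k\in\mathcal{R}$, $f=\frac{x^m-1}{\gcd(k,x^m-1)}$, $k^{\perp}=f(0)^{-1}f^*$. "$g\mid a$" for $g\mid x^m-1$ means $g$ divides the representative of $a$. The QC code generated by $(u_{i1},u_{i2})$, $i=1,2$, is $\{([r_1u_{11}+r_2u_{21}],[r_1u_{12}+r_2u_{22}]):r_i\in\mathcal{R}\}\subseteq\mathbb{F}_q^{2m}$. Symplectic inner product $\sum_{i=1}^m(u_iv_{m+i}-u_{m+i}v_i)$; dual-containing means $\mathcal{D}_3^{\perp_S}\subseteq\mathcal{D}_3$. *)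

theory Defs
  imports "HOL-Computational_Algebra.Computational_Algebra"
begin

definition xm1 :: "nat \<Rightarrow> 'a::field poly" where
  "xm1 m = monom 1 m - 1"

definition rep :: "nat \<Rightarrow> 'a::field poly \<Rightarrow> 'a poly" where
  "rep m k = k mod xm1 m"

text \<open>The conjugate: k(x^{-1}) mod (x^m - 1).\<close>
definition cbar :: "nat \<Rightarrow> 'a::field poly \<Rightarrow> 'a poly" where
  "cbar m k = rep m (\<Sum>i<m. monom (coeff (rep m k) i) ((m - i) mod m))"

text \<open>k^perp = f(0)^{-1} f^* where f = (x^m-1)/gcd(k, x^m-1); f^* is the reciprocal
  polynomial x^(deg f) f(1/x), i.e. reflect_poly f.\<close>
definition perp :: "nat \<Rightarrow> 'a::field_gcd poly \<Rightarrow> 'a poly" where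
  "perp m k = (let f = xm1 m div gcd (rep m k) (xm1 m)
               in smult (inverse (coeff f 0)) (reflect_poly f))"

definition cvec :: "nat \<Rightarrow> 'a::field poly \<Rightarrow> 'a list" where
  "cvec m k = map (coeff (rep m k)) [0..<m]"

definition qc_code :: "nat \<Rightarrow> 'a::field poly \<Rightarrow> 'a poly \<Rightarrow> 'a poly \<Rightarrow> 'a poly \<Rightarrow> 'a list set" where
  "qc_code m u11 u12 u21 u22 =
     {cvec m (r1 * u11 + r2 * u21) @ cvec m (r1 * u12 + r2 * u22) | r1 r2. True}"

definition symp :: "nat \<Rightarrow> 'a::field list \<Rightarrow> 'a list \<Rightarrow> 'a" where
  "symp m u v = (\<Sum>i<m. u ! i * v ! (m + i) - u ! (m + i) * v ! i)"

definition symp_dual :: "nat \<Rightarrow> 'a::field list set \<Rightarrow> 'a list set" where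
  "symp_dual m C = {u. length u = 2 * m \<and> (\<forall>c\<in>C. symp m u c = 0)}"

definition symp_dual_containing :: "nat \<Rightarrow> 'a::field list set \<Rightarrow> bool" where
  "symp_dual_containing m C \<longleftrightarrow> symp_dual m C \<subseteq> C"

definition rdvd :: "nat \<Rightarrow> 'a::field poly \<Rightarrow> 'a poly \<Rightarrow> bool" where
  "rdvd m g a \<longleftrightarrow> g dvd rep m a"

end

theory Submission
  imports Defs "HOL-Number_Theory.Cong"
begin

text \<open>
  Write a word of length 2m as a pair ([a], [b]) with a, b in R, and let u' = u(x^-1) denote
  conjugation in R. The dot product of coefficient vectors satisfies <r a, b> = <a, r' b> and is
  nondegenerate, and the annihilator of g' is generated by the reciprocal of (x^m - 1)/g, i.e. by
  g^perp. Hence the symplectic dual of the code consists of the pairs with g1^perp | v' a - b and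
  g2^perp | a - v' b. Since v^2 - 1 is a unit, the code consists of the pairs with g1 | a - v b
  and g2 | b - v a, and the dual is generated by (v' g1^perp, g1^perp) and (g2^perp, v' g2^perp).
  Dual containment thus amounts to four divisibilities on these generators. The fourth,
  g1 | g2^perp (1 - v' v), is equivalent to the second: with h_i = (x^m - 1)/g_i both say that
  h2 (1 - v' v) h1' vanishes in R, up to conjugation, because 1 - v' v is self-conjugate.
\<close>

section \<open>Congruences\<close>

lemma dvd_cong_iff:
  fixes a b n :: "'a::unique_euclidean_ring"
  assumes "[a = b] (mod n)" and "d dvd n"
  shows "d dvd a \<longleftrightarrow> d dvd b"
  using assms by (intro cong_dvd_iff) (rule cong_dvd_modulus)

lemma dvd_mult_unit_iff:
  fixes u w n :: "'a::unique_euclidean_ring"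
  assumes "[u * w = 1] (mod n)" and "d dvd n"
  shows "d dvd u * z \<longleftrightarrow> d dvd z"
proof
  assume "d dvd u * z"
  then have "d dvd w * (u * z)"
    by simp
  moreover have "[w * (u * z) = z] (mod n)"
    using cong_scalar_right[OF assms(1), of z] by (simp add: ac_simps)
  ultimately show "d dvd z"
    using dvd_cong_iff[OF _ assms(2)] by blast
qed simp

lemma pcompose_cong:
  fixes q1 q2 :: "'a::field poly"
  assumes "[q1 = q2] (mod n)"
  shows "[p \<circ>\<^sub>p q1 = p \<circ>\<^sub>p q2] (mod n)"
proof (induction p)
  case (pCons a p)
  then show ?case
    using assms by (simp add: pcompose_pCons cong_add cong_mult)
qed simp

lemma divisibility_system_inclusion_iff:
  fixes g1 g2 P1 P2 v V E n :: "'a::unique_euclidean_ring"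
  assumes E: "[(V\<^sup>2 - 1) * E = 1] (mod n)" and g1: "g1 dvd n" and g2: "g2 dvd n"
  shows "(\<forall>a b. P1 dvd V * a - b \<and> P2 dvd a - V * b \<longrightarrow> g1 dvd a - v * b \<and> g2 dvd b - v * a) \<longleftrightarrow>
    g1 dvd P1 * (v - V) \<and> g2 dvd P1 * (1 - V * v) \<and> g1 dvd P2 * (1 - V * v) \<and> g2 dvd P2 * (V - v)"
    (is "?incl \<longleftrightarrow> ?c1 \<and> ?c2 \<and> ?c3 \<and> ?c4")
proof
  assume incl: ?incl
  \<comment> \<open>Test the inclusion on the generators (V P1, P1) and (P2, V P2) of the solution set.\<close>
  have "P1 dvd V * (V * P1) - P1" and "P2 dvd V * P1 - V * P1"
    by (simp_all add: dvd_diff)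
  then have "g1 dvd V * P1 - v * P1 \<and> g2 dvd P1 - v * (V * P1)"
    using incl by blast
  moreover have "P1 dvd V * P2 - V * P2" and "P2 dvd P2 - V * (V * P2)"
    by (simp_all add: dvd_diff)
  then have "g1 dvd P2 - v * (V * P2) \<and> g2 dvd V * P2 - v * P2"
    using incl by blast
  ultimately show "?c1 \<and> ?c2 \<and> ?c3 \<and> ?c4"
    by (metis (no_types, lifting) dvd_minus_iff minus_diff_eq mult.commute mult.left_commute
        right_diff_distrib mult_1_right)
next
  assume c: "?c1 \<and> ?c2 \<and> ?c3 \<and> ?c4"
  show ?incl
  proof (intro allI impI)
    fix a b
    assume "P1 dvd V * a - b \<and> P2 dvd a - V * b"
    then obtain s t where s: "V * a - b = P1 * s" and t: "a - V * b = P2 * t"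
      by (auto elim!: dvdE)
    \<comment> \<open>Up to the unit V^2 - 1, every solution (a, b) is s (V P1, P1) - t (P2, V P2).\<close>
    have "(V\<^sup>2 - 1) * (a - v * b) = (V - v) * (V * a - b) + (v * V - 1) * (a - V * b)"
      by (simp add: algebra_simps power2_eq_square)
    then have "(V\<^sup>2 - 1) * (a - v * b) = - (P1 * (v - V)) * s - (P2 * (1 - V * v)) * t"
      unfolding s t by (simp add: algebra_simps)
    then have "g1 dvd (V\<^sup>2 - 1) * (a - v * b)"
      using c by (simp add: dvd_diff dvd_mult2)
    moreover have "(V\<^sup>2 - 1) * (b - v * a) = (1 - v * V) * (V * a - b) + (v - V) * (a - V * b)"
      by (simp add: algebra_simps power2_eq_square)
    then have "(V\<^sup>2 - 1) * (b - v * a) = (P1 * (1 - V * v)) * s - (P2 * (V - v)) * t"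
      unfolding s t by (simp add: algebra_simps)
    then have "g2 dvd (V\<^sup>2 - 1) * (b - v * a)"
      using c by (simp add: dvd_diff dvd_mult2)
    ultimately show "g1 dvd a - v * b \<and> g2 dvd b - v * a"
      using dvd_mult_unit_iff[OF E g1] dvd_mult_unit_iff[OF E g2] by simp
  qed
qed

section \<open>The ring R = F[x]/(x^m - 1)\<close>

lemma coeff_xm1:
  "0 < m \<Longrightarrow> coeff (xm1 m :: 'a::field poly) k = (if k = m then 1 else if k = 0 then -1 else 0)"
  unfolding xm1_def by (auto simp: coeff_monom)

lemma degree_xm1: "0 < m \<Longrightarrow> degree (xm1 m :: 'a::field poly) = m"
proof -
  assume "0 < m"
  then have "degree (monom (1::'a) m + (- 1)) = m"
    by (subst degree_add_eq_left) (auto simp: degree_monom_eq)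
  then show ?thesis unfolding xm1_def by simp
qed

lemma xm1_neq_0: "0 < m \<Longrightarrow> xm1 m \<noteq> (0 :: 'a::field poly)"
  by (metis degree_0 degree_xm1 less_irrefl)

lemma rep_eq_iff_cong: "rep m a = rep m b \<longleftrightarrow> [a = b] (mod xm1 m)"
  by (simp add: rep_def cong_def)

lemma cong_rep: "[rep m a = a] (mod xm1 m)"
  by (simp add: rep_def)

lemma coeff_rep_eq_0:
  assumes "0 < m" and "m \<le> i"
  shows "coeff (rep m a) i = 0"
proof (cases "rep m a = 0")
  case False
  then have "degree (rep m a) < m"
    using degree_mod_less[OF xm1_neq_0[OF assms(1)], of a]
    by (simp add: rep_def degree_xm1[OF assms(1)])
  then show ?thesis
    using assms(2) by (simp add: coeff_eq_0)
qed simp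

lemma rep_eq_self: "0 < m \<Longrightarrow> degree a < m \<Longrightarrow> rep m a = a"
  unfolding rep_def by (simp add: degree_xm1 mod_poly_less)

lemma rdvd_cong_iff:
  assumes "g dvd xm1 m" and "[a = b] (mod xm1 m)"
  shows "rdvd m g a \<longleftrightarrow> g dvd b"
  unfolding rdvd_def using cong_trans[OF cong_rep assms(2)] assms(1) by (rule dvd_cong_iff)

lemma inverse_mod_xm1_exists:
  fixes u :: "'a::field_gcd poly"
  assumes m: "0 < m" and "gcd (rep m u) (xm1 m) = 1"
  obtains w where "[u * w = 1] (mod xm1 m)"
proof
  have "gcd u (xm1 m) = 1"
    using assms(2) by (simp add: rep_def gcd_mod_left xm1_neq_0[OF m])
  then have "fst (bezout_coefficients u (xm1 m)) * u + snd (bezout_coefficients u (xm1 m)) * xm1 m = 1"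
    by (metis bezout_coefficients_fst_snd)
  then show "[u * fst (bezout_coefficients u (xm1 m)) = 1] (mod xm1 m)"
    by (metis cong_iff_lin cong_sym mult.commute add.commute)
qed

lemma monom_m_cong_1: "[monom 1 m = 1] (mod xm1 m)"
  by (simp add: xm1_def cong_iff_dvd_diff)

lemma monom_cong_mod: "[monom c k = monom c (k mod m)] (mod xm1 m)"
proof -
  have "[monom (1::'a::field) m = 1] (mod xm1 m)"
    by (rule monom_m_cong_1)
  then have "[monom 1 (k mod m) * monom 1 m ^ (k div m) = monom (1::'a) (k mod m) * 1 ^ (k div m)] (mod xm1 m)"
    by (intro cong_scalar_left cong_pow)
  then have "[monom 1 k = monom (1::'a) (k mod m)] (mod xm1 m)"
    by (simp add: monom_power mult_monom)
  then have "[smult c (monom 1 k) = smult c (monom (1::'a) (k mod m))] (mod xm1 m)"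
    using cong_scalar_left[of _ _ _ "[:c:]"] by simp
  then show ?thesis by (simp add: smult_monom)
qed

section \<open>Conjugation\<close>

text \<open>
  Substituting x^(m-1) for x realises the conjugation x |-> x^-1 of R on all of F[x], where it is
  a ring homomorphism; cbar is its reduced form.
\<close>

definition rconj :: "nat \<Rightarrow> 'a::field poly \<Rightarrow> 'a poly" where
  "rconj m p = p \<circ>\<^sub>p monom 1 (m - 1)"

lemma rconj_diff: "rconj m (p - q) = rconj m p - rconj m q"
  unfolding rconj_def by (rule pcompose_diff)

lemma rconj_mult: "rconj m (p * q) = rconj m p * rconj m q"
  unfolding rconj_def by (rule pcompose_mult)

lemma rconj_0 [simp]: "rconj m 0 = 0"
  by (simp add: rconj_def)

lemma rconj_1 [simp]: "rconj m 1 = 1"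
  unfolding rconj_def by (rule pcompose_1)

lemma rconj_smult: "rconj m (smult c p) = smult c (rconj m p)"
  unfolding rconj_def by (rule pcompose_smult)

lemma rconj_power: "rconj m (p ^ k) = rconj m p ^ k"
  by (induction k) (simp_all add: rconj_mult)

lemma rconj_pCons: "rconj m (pCons c p) = [:c:] + monom 1 (m - 1) * rconj m p"
  unfolding rconj_def by (rule pcompose_pCons)

lemma rconj_monom: "rconj m (monom c k) = monom c ((m - 1) * k)"
proof -
  have x: "rconj m [:0, 1:] = monom 1 (m - 1)"
    by (simp add: rconj_def pcompose_pCons)
  have "rconj m (smult c ([:0, 1:] ^ k)) = smult c (monom 1 (m - 1) ^ k)"
    by (simp only: rconj_smult rconj_power x)
  then show ?thesis
    by (simp add: monom_power smult_monom mult.commute flip: monom_altdef)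
qed

lemma xm1_dvd_rconj_xm1: "xm1 m dvd rconj m (xm1 m)"
  using monom_cong_mod[of 1 "(m - 1) * m" m]
  by (simp add: xm1_def rconj_diff rconj_monom cong_iff_dvd_diff)

lemma rconj_cong: "[p = q] (mod xm1 m) \<Longrightarrow> [rconj m p = rconj m q] (mod xm1 m)"
  unfolding cong_iff_dvd_diff
proof -
  assume "xm1 m dvd p - q"
  then obtain k where "p - q = xm1 m * k"
    by (elim dvdE)
  then have "rconj m p - rconj m q = rconj m (xm1 m) * rconj m k"
    by (metis rconj_diff rconj_mult)
  then show "xm1 m dvd rconj m p - rconj m q"
    by (simp add: dvd_mult2 xm1_dvd_rconj_xm1)
qed

lemma rconj_rconj: "0 < m \<Longrightarrow> [rconj m (rconj m p) = p] (mod xm1 m)"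
proof -
  assume "0 < m"
  then have "(m - 1) * (m - 1) + m * 1 = 1 + m * (m - 1)"
    by (cases m) (auto simp: algebra_simps)
  then have "(m - 1) * (m - 1) mod m = 1 mod m"
    by (metis mod_mult_self2)
  then have "[monom 1 ((m - 1) * (m - 1)) = monom (1::'a) (1 mod m)] (mod xm1 m)"
    using monom_cong_mod[of 1 "(m - 1) * (m - 1)" m] by simp
  also have "[monom (1::'a) (1 mod m) = monom 1 1] (mod xm1 m)"
    using monom_cong_mod[of 1 1 m] by (rule cong_sym)
  finally have "[p \<circ>\<^sub>p monom 1 ((m - 1) * (m - 1)) = p \<circ>\<^sub>p monom 1 1] (mod xm1 m)"
    by (rule pcompose_cong)
  moreover have "monom (1::'a) 1 = [:0, 1:]"
    by (simp add: monom_altdef)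
  moreover have "monom 1 (m - 1) \<circ>\<^sub>p monom 1 (m - 1) = monom (1::'a) ((m - 1) * (m - 1))"
    using rconj_monom[of m 1 "m - 1"] unfolding rconj_def .
  ultimately show ?thesis
    by (simp add: rconj_def flip: pcompose_assoc)
qed

lemma dvd_rconj_iff:
  fixes p :: "'a::field poly"
  assumes "0 < m"
  shows "xm1 m dvd rconj m p \<longleftrightarrow> xm1 m dvd p"
proof
  assume "xm1 m dvd rconj m p"
  then have "[rconj m (rconj m p) = 0] (mod xm1 m)"
    using rconj_cong[of "rconj m p" 0 m] by (simp add: cong_0_iff)
  then have "[p = 0] (mod xm1 m)"
    by (rule cong_trans[OF cong_sym[OF rconj_rconj[OF assms]]])
  then show "xm1 m dvd p"
    by (simp add: cong_0_iff)
next
  assume "xm1 m dvd p"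
  then show "xm1 m dvd rconj m p"
    using rconj_cong[of p 0 m] by (simp add: cong_0_iff)
qed

lemma rconj_sum: "rconj m (sum f A) = (\<Sum>i\<in>A. rconj m (f i))"
  unfolding rconj_def by (rule pcompose_sum)

lemma rep_as_sum:
  assumes m: "0 < m"
  shows "rep m p = (\<Sum>i<m. monom (coeff (rep m p) i) i)"
proof -
  obtain k where k: "m = Suc k"
    using m by (cases m) auto
  have "coeff (rep m p) i = 0" if "k < i" for i
    using m that k by (intro coeff_rep_eq_0) auto
  then have "degree (rep m p) \<le> k"
    by (intro degree_le) auto
  then have "rep m p = (\<Sum>i\<le>k. monom (coeff (rep m p) i) i)"
    by (rule poly_as_sum_of_monoms'[symmetric])
  then show ?thesis
    unfolding k lessThan_Suc_atMost .
qed

lemma mult_pred_mod_eq: "(i::nat) < m \<Longrightarrow> (m - 1) * i mod m = (m - i) mod m"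
proof (cases "i = 0")
  case False
  assume "i < m"
  with False have "(m - 1) * i = (m - i) + m * (i - 1)"
    by (simp add: diff_mult_distrib diff_mult_distrib2 mult.commute)
  then show ?thesis
    by (simp only: mod_mult_self2)
qed simp

lemma cbar_cong_rconj:
  assumes m: "0 < m"
  shows "[cbar m p = rconj m p] (mod xm1 m)"
proof -
  define c where "c i = coeff (rep m p) i" for i
  have "[cbar m p = (\<Sum>i<m. monom (c i) ((m - i) mod m))] (mod xm1 m)"
    unfolding cbar_def c_def by (rule cong_rep)
  also have "[(\<Sum>i<m. monom (c i) ((m - i) mod m)) = (\<Sum>i<m. monom (c i) ((m - 1) * i))] (mod xm1 m)"
    by (rule cong_sum) (metis monom_cong_mod mult_pred_mod_eq cong_sym lessThan_iff)
  also have "[(\<Sum>i<m. monom (c i) ((m - 1) * i)) = rconj m p] (mod xm1 m)"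
  proof -
    have "rconj m (rep m p) = rconj m (\<Sum>i<m. monom (c i) i)"
      unfolding c_def by (rule arg_cong[OF rep_as_sum[OF m]])
    then have "(\<Sum>i<m. monom (c i) ((m - 1) * i)) = rconj m (rep m p)"
      by (simp add: rconj_sum rconj_monom)
    then show ?thesis
      using rconj_cong[OF cong_rep[of m p]] by simp
  qed
  finally show ?thesis .
qed

section \<open>The dot product of coefficient vectors\<close>

definition coeff_dot :: "nat \<Rightarrow> 'a::field poly \<Rightarrow> 'a poly \<Rightarrow> 'a" where
  "coeff_dot m a b = (\<Sum>i<m. coeff (rep m a) i * coeff (rep m b) i)"

lemma coeff_dot_cong:
  "[a = a'] (mod xm1 m) \<Longrightarrow> [b = b'] (mod xm1 m) \<Longrightarrow> coeff_dot m a b = coeff_dot m a' b'"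
  unfolding coeff_dot_def by (simp add: rep_eq_iff_cong[symmetric])

lemma coeff_dot_commute: "coeff_dot m a b = coeff_dot m b a"
  unfolding coeff_dot_def by (simp add: mult.commute)

lemma coeff_dot_add_left: "coeff_dot m (a + b) c = coeff_dot m a c + coeff_dot m b c"
  unfolding coeff_dot_def rep_def by (simp add: poly_mod_add_left sum.distrib algebra_simps)

lemma coeff_dot_smult_left: "coeff_dot m (smult k a) b = k * coeff_dot m a b"
  unfolding coeff_dot_def rep_def by (simp add: mod_smult_left sum_distrib_left algebra_simps)

lemma coeff_dot_diff_right: "coeff_dot m a (b - c) = coeff_dot m a b - coeff_dot m a c"
  unfolding coeff_dot_def rep_def by (simp add: poly_mod_diff_left sum_subtractf algebra_simps)

lemma coeff_dot_add_right: "coeff_dot m a (b + c) = coeff_dot m a b + coeff_dot m a c"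
  by (metis coeff_dot_add_left coeff_dot_commute)

lemma coeff_dot_smult_right: "coeff_dot m a (smult k b) = k * coeff_dot m a b"
  by (metis coeff_dot_smult_left coeff_dot_commute)

lemma coeff_dot_0_left [simp]: "coeff_dot m 0 b = 0"
  unfolding coeff_dot_def by (simp add: rep_def)

lemma coeff_dot_0_right [simp]: "coeff_dot m a 0 = 0"
  unfolding coeff_dot_def by (simp add: rep_def)

lemma rep_pCons_0:
  fixes a :: "'a::field poly"
  assumes m: "0 < m"
  shows "rep m (pCons 0 a) = pCons 0 (rep m a) - smult (coeff (rep m a) (m - 1)) (xm1 m)"
    (is "_ = ?p")
proof -
  have "[pCons 0 (rep m a) = pCons 0 a] (mod xm1 m)"
    using cong_scalar_left[OF cong_rep[of m a], of "[:0, 1:]"] by simp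
  moreover have "[smult (coeff (rep m a) (m - 1)) (xm1 m) = 0] (mod xm1 m)"
    unfolding cong_0_iff by (rule dvd_smult) simp
  ultimately have "[?p = pCons 0 a - 0] (mod xm1 m)"
    by (rule cong_diff)
  then have "rep m (pCons 0 a) = rep m ?p"
    by (simp add: rep_eq_iff_cong cong_sym_eq)
  moreover have "degree ?p < m"
  proof -
    have "coeff ?p k = 0" if "m - 1 < k" for k
      using m that coeff_rep_eq_0[OF m, of "k - 1" a]
      by (cases "k = m") (auto simp: coeff_xm1 coeff_pCons split: nat.split)
    then have "degree ?p \<le> m - 1"
      by (intro degree_le) auto
    then show ?thesis
      using m by linarith
  qed
  ultimately show ?thesis
    using rep_eq_self[OF m] by simp
qed

lemma coeff_rep_pCons_0:
  assumes "0 < m" and "i < m"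
  shows "coeff (rep m (pCons 0 a)) i = coeff (rep m a) ((i + m - 1) mod m)"
proof (cases "i = 0")
  case True
  then show ?thesis
    using assms by (simp add: rep_pCons_0 coeff_xm1)
next
  case False
  then have "(i + m - 1) mod m = i - 1"
    using assms by (simp add: mod_if)
  then show ?thesis
    using False assms by (simp add: rep_pCons_0 coeff_xm1 coeff_pCons split: nat.split)
qed

lemma coeff_dot_pCons_0:
  fixes a b :: "'a::field poly"
  assumes "0 < m"
  shows "coeff_dot m (pCons 0 a) (pCons 0 b) = coeff_dot m a b"
proof -
  define f where "f i = coeff (rep m a) i * coeff (rep m b) i" for i
  have "coeff_dot m (pCons 0 a) (pCons 0 b) = (\<Sum>i<m. f ((i + m - 1) mod m))"
    unfolding coeff_dot_def f_def by (rule sum.cong) (simp_all add: coeff_rep_pCons_0 assms)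
  also have "\<dots> = (\<Sum>i<m. f i)"
    by (rule sum.reindex_bij_witness[where j = "\<lambda>i. (i + m - 1) mod m" and i = "\<lambda>i. (i + 1) mod m"])
      (use assms in \<open>auto simp: mod_if\<close>)
  also have "\<dots> = coeff_dot m a b"
    unfolding coeff_dot_def f_def ..
  finally show ?thesis .
qed

lemma coeff_dot_pCons_0_left:
  fixes a b :: "'a::field poly"
  assumes m: "0 < m"
  shows "coeff_dot m (pCons 0 a) b = coeff_dot m a (monom 1 (m - 1) * b)"
proof -
  have "pCons 0 (monom 1 (m - 1) * b) = monom 1 m * b"
    using m by (cases m) (simp_all add: monom_Suc)
  also have "[monom 1 m * b = 1 * b] (mod xm1 m)"
    by (intro cong_scalar_right monom_m_cong_1)
  finally have "coeff_dot m (pCons 0 a) b = coeff_dot m (pCons 0 a) (pCons 0 (monom 1 (m - 1) * b))"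
    by (intro coeff_dot_cong) (simp_all add: cong_sym_eq)
  also have "\<dots> = coeff_dot m a (monom 1 (m - 1) * b)"
    by (rule coeff_dot_pCons_0[OF m])
  finally show ?thesis .
qed

lemma coeff_dot_mult_left:
  fixes a b :: "'a::field poly"
  assumes m: "0 < m"
  shows "coeff_dot m (r * a) b = coeff_dot m a (rconj m r * b)"
proof (induction r arbitrary: b)
  case (pCons c r)
  have "coeff_dot m (pCons c r * a) b = coeff_dot m (smult c a + pCons 0 (r * a)) b"
    by simp
  also have "\<dots> = c * coeff_dot m a b + coeff_dot m a (rconj m r * (monom 1 (m - 1) * b))"
    by (simp add: coeff_dot_add_left coeff_dot_smult_left coeff_dot_pCons_0_left[OF m] pCons.IH)
  also have "\<dots> = coeff_dot m a (rconj m (pCons c r) * b)"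
    by (simp add: rconj_pCons coeff_dot_add_right coeff_dot_smult_right algebra_simps)
  finally show ?case .
qed simp

lemma coeff_dot_monom_left:
  fixes b :: "'a::field poly"
  assumes m: "0 < m" and i: "i < m"
  shows "coeff_dot m (monom 1 i) b = coeff (rep m b) i"
proof -
  have "rep m (monom 1 i) = (monom 1 i :: 'a poly)"
    using i by (intro rep_eq_self[OF m]) (simp add: degree_monom_eq)
  then have "coeff_dot m (monom 1 i) b = (\<Sum>j<m. if j = i then coeff (rep m b) j else 0)"
    unfolding coeff_dot_def by (intro sum.cong) (auto simp: coeff_monom)
  also have "\<dots> = coeff (rep m b) i"
    using i by simp
  finally show ?thesis .
qed

lemma coeff_dot_nondegenerate:
  fixes b :: "'a::field poly"
  assumes m: "0 < m"
  shows "(\<forall>r. coeff_dot m r b = 0) \<longleftrightarrow> xm1 m dvd b"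
proof
  assume zero: "\<forall>r. coeff_dot m r b = 0"
  have "rep m b = 0"
  proof (rule poly_eqI)
    fix i
    show "coeff (rep m b) i = coeff 0 i"
      using zero coeff_dot_monom_left[OF m, of i b] coeff_rep_eq_0[OF m, of i b]
      by (cases "i < m") auto
  qed
  then show "xm1 m dvd b"
    by (simp add: rep_def dvd_eq_mod_eq_0)
next
  assume "xm1 m dvd b"
  then have "coeff_dot m r b = coeff_dot m r 0" for r
    by (intro coeff_dot_cong) (simp_all add: cong_0_iff)
  then show "\<forall>r. coeff_dot m r b = 0"
    by simp
qed

section \<open>Reciprocal polynomials and annihilators\<close>

lemma monom_unit_mod_xm1:
  assumes "0 < m"
  shows "[monom 1 e * monom 1 ((m - 1) * e) = (1 :: 'a::field poly)] (mod xm1 m)"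
proof -
  have "e + (m - 1) * e = m * e"
    using assms by (cases m) simp_all
  then show ?thesis
    using monom_cong_mod[of "1::'a" "m * e" m] by (simp add: mult_monom monom_0 one_pCons)
qed

lemma reflect_poly_cong_rconj:
  fixes d :: "'a::field poly"
  assumes m: "0 < m"
  shows "[reflect_poly d = monom 1 (degree d) * rconj m d] (mod xm1 m)"
proof (induction d)
  case (pCons c p)
  show ?case
  proof (cases "p = 0")
    case True
    then show ?thesis
      by (simp add: rconj_def monom_0 one_pCons)
  next
    case False
    have "[monom 1 (degree p) * monom 1 m = monom 1 (degree p) * (1 :: 'a poly)] (mod xm1 m)"
      by (intro cong_scalar_left monom_m_cong_1)
    then have "[monom 1 (degree p) * monom 1 m * rconj m p = monom 1 (degree p) * rconj m p] (mod xm1 m)"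
      by (metis cong_scalar_right mult_1_right)
    then have "[monom 1 (degree p) * monom 1 m * rconj m p = reflect_poly p] (mod xm1 m)"
      by (rule cong_trans[OF _ cong_sym[OF pCons.IH]])
    then have "[monom c (Suc (degree p)) + monom 1 (degree p) * monom 1 m * rconj m p
        = monom c (Suc (degree p)) + reflect_poly p] (mod xm1 m)"
      by (intro cong_add cong_refl)
    moreover have "monom 1 (degree (pCons c p)) * rconj m (pCons c p)
        = monom c (Suc (degree p)) + monom 1 (degree p) * monom 1 m * rconj m p"
      using False m by (simp add: rconj_pCons mult_monom algebra_simps monom_0 smult_monom)
    ultimately show ?thesis
      using False by (simp add: reflect_poly_pCons' cong_sym_eq add.commute)
  qed
qed simp

lemma reflect_xm1:
  assumes "0 < m"
  shows "reflect_poly (xm1 m :: 'a::field poly) = - xm1 m"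
  by (rule poly_eqI) (use assms in \<open>auto simp: coeff_reflect_poly degree_xm1 coeff_xm1\<close>)

lemma reflect_poly_dvd_xm1:
  fixes d :: "'a::field poly"
  assumes "0 < m" and "d dvd xm1 m"
  shows "reflect_poly d dvd xm1 m"
proof -
  obtain h where "xm1 m = d * h"
    using assms(2) by (elim dvdE)
  then have "- xm1 m = reflect_poly d * reflect_poly h"
    by (metis reflect_xm1[OF assms(1)] reflect_poly_mult)
  then show ?thesis
    by (metis dvd_minus_iff dvd_triv_left)
qed

lemma dvd_rconj_iff_reflect_poly_dvd:
  fixes d y :: "'a::field poly"
  assumes m: "0 < m" and d: "d dvd xm1 m"
  shows "d dvd rconj m y \<longleftrightarrow> reflect_poly d dvd y"
proof
  define e where "e = degree d"
  have R: "[reflect_poly d = monom 1 e * rconj m d] (mod xm1 m)"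
    unfolding e_def by (rule reflect_poly_cong_rconj[OF m])
  have Rn: "reflect_poly d dvd xm1 m"
    by (rule reflect_poly_dvd_xm1[OF m d])
  show "reflect_poly d dvd y" if dvd: "d dvd rconj m y"
  proof -
    obtain k where k: "rconj m y = d * k"
      using dvd by (elim dvdE)
    have "[y = rconj m d * rconj m k] (mod xm1 m)"
      using cong_sym[OF rconj_rconj[OF m, of y]] by (simp add: k rconj_mult)
    then have "[monom 1 e * y = (monom 1 e * rconj m d) * rconj m k] (mod xm1 m)"
      by (metis cong_scalar_left mult.assoc)
    also have "[(monom 1 e * rconj m d) * rconj m k = reflect_poly d * rconj m k] (mod xm1 m)"
      by (intro cong_scalar_right cong_sym[OF R])
    finally have "reflect_poly d dvd monom 1 e * y \<longleftrightarrow> reflect_poly d dvd reflect_poly d * rconj m k"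
      using Rn by (rule dvd_cong_iff)
    then show ?thesis
      using dvd_mult_unit_iff[OF monom_unit_mod_xm1[OF m] Rn] by simp
  qed
  show "d dvd rconj m y" if dvd: "reflect_poly d dvd y"
  proof -
    obtain k where k: "y = reflect_poly d * k"
      using dvd by (elim dvdE)
    have "[rconj m (reflect_poly d) = rconj m (monom 1 e) * rconj m (rconj m d)] (mod xm1 m)"
      using rconj_cong[OF R] by (simp add: rconj_mult)
    also have "[rconj m (monom 1 e) * rconj m (rconj m d) = rconj m (monom 1 e) * d] (mod xm1 m)"
      by (intro cong_scalar_left rconj_rconj[OF m])
    finally have "[rconj m y = rconj m (monom 1 e) * d * rconj m k] (mod xm1 m)"
      unfolding k rconj_mult by (rule cong_scalar_right)
    then have "d dvd rconj m y \<longleftrightarrow> d dvd rconj m (monom 1 e) * d * rconj m k"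
      using d by (rule dvd_cong_iff)
    then show ?thesis
      by simp
  qed
qed

lemma xm1_dvd_rconj_mult_iff:
  fixes g y :: "'a::field poly"
  assumes m: "0 < m" and g: "g dvd xm1 m"
  shows "xm1 m dvd rconj m g * y \<longleftrightarrow> reflect_poly (xm1 m div g) dvd y"
proof -
  define h where "h = xm1 m div g"
  have n: "xm1 m = g * h"
    unfolding h_def using g by simp
  have "g \<noteq> 0"
    using n xm1_neq_0[OF m] by auto
  have "xm1 m dvd rconj m g * y \<longleftrightarrow> xm1 m dvd rconj m (rconj m g * y)"
    by (rule dvd_rconj_iff[OF m, symmetric])
  also have "\<dots> \<longleftrightarrow> xm1 m dvd g * rconj m y"
  proof (rule dvd_cong_iff)
    show "[rconj m (rconj m g * y) = g * rconj m y] (mod xm1 m)"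
      unfolding rconj_mult by (rule cong_scalar_right[OF rconj_rconj[OF m]])
  qed simp
  also have "\<dots> \<longleftrightarrow> h dvd rconj m y"
    using \<open>g \<noteq> 0\<close> unfolding n by simp
  also have "\<dots> \<longleftrightarrow> reflect_poly h dvd y"
    by (rule dvd_rconj_iff_reflect_poly_dvd[OF m]) (simp add: n)
  finally show ?thesis
    unfolding h_def .
qed

lemma dvd_mult_reflect_poly_iff:
  fixes g z k :: "'a::field poly"
  assumes m: "0 < m" and g: "g dvd xm1 m"
  shows "g dvd z * reflect_poly k \<longleftrightarrow> xm1 m dvd (xm1 m div g) * z * rconj m k"
proof -
  define h where "h = xm1 m div g"
  have n: "xm1 m = g * h"
    unfolding h_def using g by simp
  have "h \<noteq> 0"
    using n xm1_neq_0[OF m] by auto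
  have "g dvd z * reflect_poly k \<longleftrightarrow> xm1 m dvd h * (z * reflect_poly k)"
    unfolding n using \<open>h \<noteq> 0\<close> by (simp add: mult.commute[of g h])
  also have "\<dots> \<longleftrightarrow> xm1 m dvd monom 1 (degree k) * (h * z * rconj m k)"
  proof (rule dvd_cong_iff)
    show "[h * (z * reflect_poly k) = monom 1 (degree k) * (h * z * rconj m k)] (mod xm1 m)"
      using cong_scalar_left[OF reflect_poly_cong_rconj[OF m, of k], of "h * z"]
      by (simp add: ac_simps)
  qed simp
  also have "\<dots> \<longleftrightarrow> xm1 m dvd h * z * rconj m k"
    by (rule dvd_mult_unit_iff[OF monom_unit_mod_xm1[OF m]]) simp
  finally show ?thesis
    unfolding h_def .
qed

lemma perp_eq:
  fixes g :: "'a::field_gcd poly"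
  assumes m: "0 < m" and monic: "lead_coeff g = 1" and g: "g dvd xm1 m"
  shows "perp m g = smult (inverse (coeff (xm1 m div g) 0)) (reflect_poly (xm1 m div g))"
    and "coeff (xm1 m div g) 0 \<noteq> 0"
proof -
  have "gcd (rep m g) (xm1 m) = gcd g (xm1 m)"
    unfolding rep_def by (rule gcd_mod_left[OF xm1_neq_0[OF m]])
  also have "\<dots> = normalize g"
    using g by (rule gcd_proj1_if_dvd)
  also have "\<dots> = g"
    using monic by (simp add: normalize_poly_def one_pCons[symmetric])
  finally show "perp m g = smult (inverse (coeff (xm1 m div g) 0)) (reflect_poly (xm1 m div g))"
    unfolding perp_def by (simp add: Let_def)
  have "coeff (xm1 m) 0 = coeff g 0 * coeff (xm1 m div g) 0"
    using g by (metis coeff_mult_0 dvd_mult_div_cancel)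
  then show "coeff (xm1 m div g) 0 \<noteq> 0"
    using m by (auto simp: coeff_xm1)
qed

lemma perp_dvd_iff:
  fixes g :: "'a::field_gcd poly"
  assumes "0 < m" and "lead_coeff g = 1" and "g dvd xm1 m"
  shows "perp m g dvd y \<longleftrightarrow> reflect_poly (xm1 m div g) dvd y"
  using perp_eq[OF assms] by (simp add: smult_dvd_iff)

lemma dvd_mult_perp_iff:
  fixes g :: "'a::field_gcd poly"
  assumes "0 < m" and "lead_coeff g = 1" and "g dvd xm1 m"
  shows "d dvd z * perp m g \<longleftrightarrow> d dvd z * reflect_poly (xm1 m div g)"
  using perp_eq[OF assms] by (simp add: dvd_smult_iff)

lemma dvd_perp_mult_swap:
  fixes g1 g2 t :: "'a::field_gcd poly"
  assumes m: "0 < m"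
    and monic1: "lead_coeff g1 = 1" and g1: "g1 dvd xm1 m"
    and monic2: "lead_coeff g2 = 1" and g2: "g2 dvd xm1 m"
    and t: "[rconj m t = t] (mod xm1 m)"
  shows "g2 dvd perp m g1 * t \<longleftrightarrow> g1 dvd perp m g2 * t"
proof -
  define h1 where "h1 = xm1 m div g1"
  define h2 where "h2 = xm1 m div g2"
  have "g2 dvd perp m g1 * t \<longleftrightarrow> g2 dvd t * reflect_poly h1"
    unfolding h1_def using dvd_mult_perp_iff[OF m monic1 g1] by (simp add: mult.commute)
  also have "\<dots> \<longleftrightarrow> xm1 m dvd h2 * t * rconj m h1"
    unfolding h2_def by (rule dvd_mult_reflect_poly_iff[OF m g2])
  also have "\<dots> \<longleftrightarrow> xm1 m dvd rconj m (h2 * t * rconj m h1)"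
    by (rule dvd_rconj_iff[OF m, symmetric])
  also have "\<dots> \<longleftrightarrow> xm1 m dvd h1 * t * rconj m h2"
  proof (rule dvd_cong_iff)
    have "[rconj m h2 * rconj m t * rconj m (rconj m h1) = rconj m h2 * t * h1] (mod xm1 m)"
      by (intro cong_mult cong_refl t rconj_rconj[OF m])
    then show "[rconj m (h2 * t * rconj m h1) = h1 * t * rconj m h2] (mod xm1 m)"
      by (simp add: rconj_mult ac_simps)
  qed simp
  also have "\<dots> \<longleftrightarrow> g1 dvd t * reflect_poly h2"
    unfolding h1_def by (rule dvd_mult_reflect_poly_iff[OF m g1, symmetric])
  also have "\<dots> \<longleftrightarrow> g1 dvd perp m g2 * t"
    unfolding h2_def using dvd_mult_perp_iff[OF m monic2 g2] by (simp add: mult.commute)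
  finally show ?thesis .
qed

section \<open>The code and its symplectic dual\<close>

lemma symp_cvec_append:
  "symp m (cvec m a @ cvec m b) (cvec m c @ cvec m d) = coeff_dot m a d - coeff_dot m b c"
  unfolding symp_def coeff_dot_def by (simp add: nth_append cvec_def sum_subtractf)

lemma length_cvec [simp]: "length (cvec m a) = m"
  by (simp add: cvec_def)

lemma cvec_eq_iff:
  assumes m: "0 < m"
  shows "cvec m a = cvec m b \<longleftrightarrow> [a = b] (mod xm1 m)"
proof -
  have "cvec m a = cvec m b \<longleftrightarrow> (\<forall>i<m. coeff (rep m a) i = coeff (rep m b) i)"
    unfolding cvec_def by (simp add: list_eq_iff_nth_eq)
  also have "\<dots> \<longleftrightarrow> rep m a = rep m b"
    using coeff_rep_eq_0[OF m] by (metis not_less poly_eqI)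
  finally show ?thesis
    by (simp add: rep_eq_iff_cong)
qed

lemma cvec_Poly:
  assumes m: "0 < m" and len: "length xs = m"
  shows "cvec m (Poly xs :: 'a::field poly) = xs"
proof -
  have "coeff (Poly xs :: 'a poly) i = 0" if "m - 1 < i" for i
    using that len by (simp add: nth_default_def)
  then have "degree (Poly xs :: 'a poly) \<le> m - 1"
    by (intro degree_le) auto
  then have "rep m (Poly xs) = (Poly xs :: 'a poly)"
    using m by (intro rep_eq_self) auto
  then show ?thesis
    unfolding cvec_def using len by (intro nth_equalityI) (auto simp: nth_default_def)
qed

lemma symp_qc_codeword:
  fixes a b g1 g2 v :: "'a::field poly"
  assumes m: "0 < m"
  shows "symp m (cvec m a @ cvec m b)
      (cvec m (r1 * g1 + r2 * (v * g2)) @ cvec m (r1 * (v * g1) + r2 * g2))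
    = coeff_dot m r1 (rconj m g1 * (rconj m v * a - b)) + coeff_dot m r2 (rconj m g2 * (a - rconj m v * b))"
proof -
  have factor: "coeff_dot m x (r * y) = coeff_dot m r (rconj m y * x)" for x r y :: "'a poly"
  proof -
    have "coeff_dot m x (r * y) = coeff_dot m (y * r) x"
      by (simp add: coeff_dot_commute mult.commute)
    also have "\<dots> = coeff_dot m r (rconj m y * x)"
      by (rule coeff_dot_mult_left[OF m])
    finally show ?thesis .
  qed
  have "symp m (cvec m a @ cvec m b)
      (cvec m (r1 * g1 + r2 * (v * g2)) @ cvec m (r1 * (v * g1) + r2 * g2))
    = coeff_dot m r1 (rconj m (v * g1) * a) + coeff_dot m r2 (rconj m g2 * a)
      - (coeff_dot m r1 (rconj m g1 * b) + coeff_dot m r2 (rconj m (v * g2) * b))"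
    by (simp only: symp_cvec_append coeff_dot_add_right factor[of a r1] factor[of a r2]
        factor[of b r1] factor[of b r2])
  also have "\<dots> = coeff_dot m r1 (rconj m (v * g1) * a - rconj m g1 * b)
      + coeff_dot m r2 (rconj m g2 * a - rconj m (v * g2) * b)"
    by (simp add: coeff_dot_diff_right)
  also have "rconj m (v * g1) * a - rconj m g1 * b = rconj m g1 * (rconj m v * a - b)"
    by (simp add: rconj_mult algebra_simps)
  also have "rconj m g2 * a - rconj m (v * g2) * b = rconj m g2 * (a - rconj m v * b)"
    by (simp add: rconj_mult algebra_simps)
  finally show ?thesis .
qed

lemma symp_orthogonal_qc_code_iff:
  fixes a b g1 g2 v :: "'a::field_gcd poly"
  assumes m: "0 < m"
    and monic1: "lead_coeff g1 = 1" and g1: "g1 dvd xm1 m"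
    and monic2: "lead_coeff g2 = 1" and g2: "g2 dvd xm1 m"
  shows "(\<forall>c\<in>qc_code m g1 (v * g1) (v * g2) g2. symp m (cvec m a @ cvec m b) c = 0) \<longleftrightarrow>
    perp m g1 dvd rconj m v * a - b \<and> perp m g2 dvd a - rconj m v * b"
proof -
  define z1 where "z1 = rconj m g1 * (rconj m v * a - b)"
  define z2 where "z2 = rconj m g2 * (a - rconj m v * b)"
  have "(\<forall>c\<in>qc_code m g1 (v * g1) (v * g2) g2. symp m (cvec m a @ cvec m b) c = 0) \<longleftrightarrow>
      (\<forall>r1 r2. symp m (cvec m a @ cvec m b)
        (cvec m (r1 * g1 + r2 * (v * g2)) @ cvec m (r1 * (v * g1) + r2 * g2)) = 0)"
    unfolding qc_code_def by blast
  also have "\<dots> \<longleftrightarrow> (\<forall>r1 r2. coeff_dot m r1 z1 + coeff_dot m r2 z2 = 0)"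
    unfolding z1_def z2_def symp_qc_codeword[OF m] ..
  also have "\<dots> \<longleftrightarrow> (\<forall>r. coeff_dot m r z1 = 0) \<and> (\<forall>r. coeff_dot m r z2 = 0)"
    by (metis add.right_neutral add_0 coeff_dot_0_left)
  also have "\<dots> \<longleftrightarrow> xm1 m dvd z1 \<and> xm1 m dvd z2"
    by (simp add: coeff_dot_nondegenerate[OF m])
  also have "\<dots> \<longleftrightarrow> perp m g1 dvd rconj m v * a - b \<and> perp m g2 dvd a - rconj m v * b"
    unfolding z1_def z2_def
    by (simp add: xm1_dvd_rconj_mult_iff[OF m] g1 g2 perp_dvd_iff[OF m monic1 g1] perp_dvd_iff[OF m monic2 g2])
  finally show ?thesis .
qed

lemma mem_qc_code_iff:
  fixes a b g1 g2 v w :: "'a::field poly"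
  assumes m: "0 < m" and g1: "g1 dvd xm1 m" and g2: "g2 dvd xm1 m"
    and w: "[(v\<^sup>2 - 1) * w = 1] (mod xm1 m)"
  shows "cvec m a @ cvec m b \<in> qc_code m g1 (v * g1) (v * g2) g2 \<longleftrightarrow>
    g1 dvd a - v * b \<and> g2 dvd b - v * a"
proof
  assume "cvec m a @ cvec m b \<in> qc_code m g1 (v * g1) (v * g2) g2"
  then obtain r1 r2 where
    "cvec m a = cvec m (r1 * g1 + r2 * (v * g2))" "cvec m b = cvec m (r1 * (v * g1) + r2 * g2)"
    unfolding qc_code_def by (auto simp: append_eq_append_conv)
  then have a: "[a = r1 * g1 + r2 * (v * g2)] (mod xm1 m)"
    and b: "[b = r1 * (v * g1) + r2 * g2] (mod xm1 m)"
    by (simp_all add: cvec_eq_iff[OF m])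
  have "[a - v * b = g1 * (r1 * (1 - v\<^sup>2))] (mod xm1 m)"
    using cong_diff[OF a cong_scalar_left[OF b, of v]] by (simp add: algebra_simps power2_eq_square)
  moreover have "[b - v * a = g2 * (r2 * (1 - v\<^sup>2))] (mod xm1 m)"
    using cong_diff[OF b cong_scalar_left[OF a, of v]] by (simp add: algebra_simps power2_eq_square)
  ultimately show "g1 dvd a - v * b \<and> g2 dvd b - v * a"
    using dvd_cong_iff g1 g2 by (metis dvd_triv_left)
next
  assume "g1 dvd a - v * b \<and> g2 dvd b - v * a"
  then obtain s1 s2 where s1: "a - v * b = g1 * s1" and s2: "b - v * a = g2 * s2"
    by (auto elim!: dvdE)
  define r1 where "r1 = - s1 * w"
  define r2 where "r2 = - s2 * w"
  have "r1 * g1 + r2 * (v * g2) = - w * ((a - v * b) + v * (b - v * a))"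
    unfolding r1_def r2_def s1 s2 by (simp add: algebra_simps)
  also have "\<dots> = a * ((v\<^sup>2 - 1) * w)"
    by (simp add: algebra_simps power2_eq_square)
  also have "[a * ((v\<^sup>2 - 1) * w) = a * 1] (mod xm1 m)"
    by (rule cong_scalar_left[OF w])
  finally have ca: "cvec m a = cvec m (r1 * g1 + r2 * (v * g2))"
    by (simp add: cvec_eq_iff[OF m] cong_sym_eq)
  have "r1 * (v * g1) + r2 * g2 = - w * (v * (a - v * b) + (b - v * a))"
    unfolding r1_def r2_def s1 s2 by (simp add: algebra_simps)
  also have "\<dots> = b * ((v\<^sup>2 - 1) * w)"
    by (simp add: algebra_simps power2_eq_square)
  also have "[b * ((v\<^sup>2 - 1) * w) = b * 1] (mod xm1 m)"
    by (rule cong_scalar_left[OF w])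
  finally have cb: "cvec m b = cvec m (r1 * (v * g1) + r2 * g2)"
    by (simp add: cvec_eq_iff[OF m] cong_sym_eq)
  show "cvec m a @ cvec m b \<in> qc_code m g1 (v * g1) (v * g2) g2"
    unfolding qc_code_def using ca cb by auto
qed

lemma symp_dual_containing_qc_code_iff:
  fixes g1 g2 v w :: "'a::field_gcd poly"
  assumes m: "0 < m"
    and monic1: "lead_coeff g1 = 1" and g1: "g1 dvd xm1 m"
    and monic2: "lead_coeff g2 = 1" and g2: "g2 dvd xm1 m"
    and w: "[(v\<^sup>2 - 1) * w = 1] (mod xm1 m)"
  shows "symp_dual_containing m (qc_code m g1 (v * g1) (v * g2) g2) \<longleftrightarrow>
    (\<forall>a b. perp m g1 dvd rconj m v * a - b \<and> perp m g2 dvd a - rconj m v * b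
      \<longrightarrow> g1 dvd a - v * b \<and> g2 dvd b - v * a)"
proof -
  let ?C = "qc_code m g1 (v * g1) (v * g2) g2"
  have dual: "cvec m a @ cvec m b \<in> symp_dual m ?C \<longleftrightarrow>
      perp m g1 dvd rconj m v * a - b \<and> perp m g2 dvd a - rconj m v * b" for a b
    using symp_orthogonal_qc_code_iff[OF m monic1 g1 monic2 g2] by (simp add: symp_dual_def)
  have split: "u = cvec m (Poly (take m u)) @ cvec m (Poly (drop m u))" if "u \<in> symp_dual m ?C" for u
    using that by (simp add: symp_dual_def cvec_Poly[OF m])
  show ?thesis
    unfolding symp_dual_containing_def
    using dual split mem_qc_code_iff[OF m g1 g2 w] by (smt (verit) subset_iff)
qed

lemma rdvd_conditions_iff:
  fixes g1 g2 v :: "'a::field_gcd poly"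
  assumes m: "0 < m"
    and monic1: "lead_coeff g1 = 1" and g1: "g1 dvd xm1 m"
    and monic2: "lead_coeff g2 = 1" and g2: "g2 dvd xm1 m"
  shows "rdvd m g1 (perp m g1 * (v - cbar m v)) \<and> rdvd m g2 (perp m g1 * (1 - cbar m v * v)) \<and>
      rdvd m g2 (perp m g2 * (cbar m v - v)) \<longleftrightarrow>
    g1 dvd perp m g1 * (v - rconj m v) \<and> g2 dvd perp m g1 * (1 - rconj m v * v) \<and>
      g1 dvd perp m g2 * (1 - rconj m v * v) \<and> g2 dvd perp m g2 * (rconj m v - v)"
proof -
  have V: "[cbar m v = rconj m v] (mod xm1 m)"
    by (rule cbar_cong_rconj[OF m])
  have "[rconj m (1 - rconj m v * v) = 1 - rconj m v * v] (mod xm1 m)"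
    using cong_diff[OF cong_refl cong_scalar_right[OF rconj_rconj[OF m, of v], of "rconj m v"], of 1]
    by (simp add: rconj_diff rconj_mult mult.commute)
  then have swap: "g2 dvd perp m g1 * (1 - rconj m v * v) \<longleftrightarrow> g1 dvd perp m g2 * (1 - rconj m v * v)"
    by (rule dvd_perp_mult_swap[OF m monic1 g1 monic2 g2])
  have "rdvd m g1 (perp m g1 * (v - cbar m v)) \<longleftrightarrow> g1 dvd perp m g1 * (v - rconj m v)"
    by (intro rdvd_cong_iff g1 cong_scalar_left cong_diff cong_refl V)
  moreover have "rdvd m g2 (perp m g1 * (1 - cbar m v * v)) \<longleftrightarrow> g2 dvd perp m g1 * (1 - rconj m v * v)"
    by (intro rdvd_cong_iff g2 cong_scalar_left cong_diff cong_refl cong_scalar_right V)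
  moreover have "rdvd m g2 (perp m g2 * (cbar m v - v)) \<longleftrightarrow> g2 dvd perp m g2 * (rconj m v - v)"
    by (intro rdvd_cong_iff g2 cong_scalar_left cong_diff cong_refl V)
  ultimately show ?thesis
    using swap by blast
qed

theorem mainTheorem13:
  fixes g1 g2 v :: "'a::{field_gcd, finite} poly" and m :: nat
  assumes "m \<ge> 1"
    and "lead_coeff g1 = 1" and "g1 dvd xm1 m"
    and "lead_coeff g2 = 1" and "g2 dvd xm1 m"
    and "degree v < m"
    and "gcd (rep m (v ^ 2 - 1)) (xm1 m) = 1"
  shows "symp_dual_containing m (qc_code m g1 (v * g1) (v * g2) g2) \<longleftrightarrow>
           rdvd m g1 (perp m g1 * (v - cbar m v)) \<and>
           rdvd m g2 (perp m g1 * (1 - cbar m v * v)) \<and>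
           rdvd m g2 (perp m g2 * (cbar m v - v))"
proof -
  have m: "0 < m"
    using assms(1) by simp
  obtain w where w: "[(v\<^sup>2 - 1) * w = 1] (mod xm1 m)"
    using inverse_mod_xm1_exists[OF m assms(7)] .
  have w_conj: "[(rconj m v ^ 2 - 1) * rconj m w = 1] (mod xm1 m)"
    using rconj_cong[OF w] by (simp add: rconj_mult rconj_diff rconj_power)
  have "symp_dual_containing m (qc_code m g1 (v * g1) (v * g2) g2) \<longleftrightarrow>
      (\<forall>a b. perp m g1 dvd rconj m v * a - b \<and> perp m g2 dvd a - rconj m v * b
        \<longrightarrow> g1 dvd a - v * b \<and> g2 dvd b - v * a)"
    by (rule symp_dual_containing_qc_code_iff[OF m assms(2-5) w])
  also have "\<dots> \<longleftrightarrow> g1 dvd perp m g1 * (v - rconj m v) \<and> g2 dvd perp m g1 * (1 - rconj m v * v) \<and>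
      g1 dvd perp m g2 * (1 - rconj m v * v) \<and> g2 dvd perp m g2 * (rconj m v - v)"
    using assms(3,5) by (intro divisibility_system_inclusion_iff[OF w_conj]) simp_all
  also have "\<dots> \<longleftrightarrow> rdvd m g1 (perp m g1 * (v - cbar m v)) \<and>
      rdvd m g2 (perp m g1 * (1 - cbar m v * v)) \<and> rdvd m g2 (perp m g2 * (cbar m v - v))"
    by (rule rdvd_conditions_iff[OF m assms(2-5), symmetric])
  finally show ?thesis .
qed

end
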